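(* Let $a,b\ge 0$ and $t\ge 1$ be integers and let $A_1,\dots,A_n,B_1,\dots,B_n$ be subsets of a universe such that $|A_i|\le a$, $|B_i|\le b$ and $A_i\cap B_i=\emptyset$ for every $i\in [n]$, and $B_i\neq B_j$ for all distinct $i,j\in [n]$. If $n> b!\,(t(1+2a)-1)^b$, then there is a subset $I\subseteq [n]$ of size $t$ such that $A_i\cap B_j=\emptyset$ for all $i,j\in I$. *)

theory Defs
  imports Main
begin

end

theory Submission
  imports Defs "HOL-Library.Disjoint_Sets"
begin

text \<open>
  Induction on \<open>b\<close>, with \<open>s = t(2a+1) - 1\<close> fixed. Take a maximal subfamily \<open>M\<close> of indices
  whose sets \<open>B\<^sub>j\<close> are pairwise disjoint. If \<open>|M| > s\<close>, each \<open>A\<^sub>i\<close> meets at most \<open>a\<close>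
  of the disjoint sets \<open>B\<^sub>j\<close>, \<open>j \<in> M\<close>; so in the digraph \<open>i \<rightarrow> j \<longleftrightarrow> A\<^sub>i \<inter> B\<^sub>j \<noteq> {}\<close> on \<open>M\<close>
  all out-degrees are at most \<open>a\<close>, and greedily taking a vertex of in-degree at most \<open>a\<close>
  and discarding its at most \<open>2a\<close> neighbours yields \<open>t\<close> independent indices. If \<open>|M| \<le> s\<close>,
  maximality makes every \<open>B\<^sub>i\<close> with \<open>i \<notin> M\<close> meet one of the at most \<open>s(b+1)\<close> points of \<open>\<Union>{B\<^sub>j | j \<in> M}\<close>,
  so some point \<open>x\<close> lies in more than \<open>b! s\<^sup>b\<close> of the sets \<open>B\<^sub>i\<close>; the induction hypothesis
  applied to the sets \<open>B\<^sub>i - {x}\<close> gives the result, since \<open>x \<notin> A\<^sub>i\<close> for these \<open>i\<close>.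
\<close>

lemma sum_indegree_eq_sum_outdegree:
  assumes "finite V"
  shows "(\<Sum>v\<in>V. card {u\<in>V. u \<noteq> v \<and> E u v}) = (\<Sum>u\<in>V. card {v\<in>V. v \<noteq> u \<and> E u v})"
  using sum.swap_restrict[OF assms assms, of "\<lambda>_ _. 1::nat" "\<lambda>u v. v \<noteq> u \<and> E u v"]
  by (simp add: eq_commute)

lemma exists_vertex_indegree_le:
  assumes "finite V" "V \<noteq> {}"
    and outdeg: "\<And>u. u \<in> V \<Longrightarrow> card {v\<in>V. v \<noteq> u \<and> E u v} \<le> a"
  obtains v where "v \<in> V" "card {u\<in>V. u \<noteq> v \<and> E u v} \<le> a"
proof (rule ccontr)
  assume "\<not> thesis"
  then have "\<And>v. v \<in> V \<Longrightarrow> Suc a \<le> card {u\<in>V. u \<noteq> v \<and> E u v}"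
    using that not_less_eq_eq by blast
  then have "card V * Suc a \<le> (\<Sum>v\<in>V. card {u\<in>V. u \<noteq> v \<and> E u v})"
    using sum_bounded_below[of V "Suc a"] by simp
  also have "\<dots> \<le> card V * a"
    unfolding sum_indegree_eq_sum_outdegree[OF assms(1), of E]
    using sum_bounded_above[of V _ a] outdeg by simp
  finally show False
    using assms(1,2) by simp
qed

lemma exists_independent_set_of_outdegree_le:
  assumes "finite V"
    and "\<And>u. u \<in> V \<Longrightarrow> card {v\<in>V. v \<noteq> u \<and> E u v} \<le> a"
    and "t * (2 * a + 1) \<le> card V"
  shows "\<exists>I\<subseteq>V. card I = t \<and> (\<forall>i\<in>I. \<forall>j\<in>I. i \<noteq> j \<longrightarrow> \<not> E i j)"
  using assms
proof (induction t arbitrary: V)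
  case 0
  show ?case by (intro exI[of _ "{}"]) auto
next
  case (Suc t)
  then have "V \<noteq> {}" by auto
  with Suc.prems obtain v where v: "v \<in> V" "card {u\<in>V. u \<noteq> v \<and> E u v} \<le> a"
    using exists_vertex_indegree_le[of V E a] by blast
  define N where "N = insert v ({u\<in>V. u \<noteq> v \<and> E u v} \<union> {u\<in>V. u \<noteq> v \<and> E v u})"
  have "card N \<le> 2 * a + 1"
  proof -
    have "card N \<le> Suc (card ({u\<in>V. u \<noteq> v \<and> E u v} \<union> {u\<in>V. u \<noteq> v \<and> E v u}))"
      unfolding N_def by (rule card_insert_le_m1) simp_all
    also have "\<dots> \<le> Suc (card {u\<in>V. u \<noteq> v \<and> E u v} + card {u\<in>V. u \<noteq> v \<and> E v u})"
      using card_Un_le by simp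
    finally show ?thesis
      using v(2) Suc.prems(2)[OF v(1)] by simp
  qed
  moreover have "N \<subseteq> V"
    using v(1) by (auto simp: N_def)
  ultimately have "t * (2 * a + 1) \<le> card (V - N)"
    using Suc.prems(1,3) by (simp add: card_Diff_subset finite_subset)
  moreover have "card {w\<in>V - N. w \<noteq> u \<and> E u w} \<le> a" if "u \<in> V - N" for u
  proof -
    have "card {w\<in>V - N. w \<noteq> u \<and> E u w} \<le> card {w\<in>V. w \<noteq> u \<and> E u w}"
      using Suc.prems(1) by (intro card_mono) auto
    then show ?thesis
      using Suc.prems(2) that by fastforce
  qed
  ultimately obtain I where I: "I \<subseteq> V - N" "card I = t" "\<forall>i\<in>I. \<forall>j\<in>I. i \<noteq> j \<longrightarrow> \<not> E i j"
    using Suc.IH[of "V - N"] Suc.prems(1) by blast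
  have "v \<notin> I" "finite I"
    using I(1) Suc.prems(1) finite_subset by (auto simp: N_def)
  then show ?case
    using I v(1) by (intro exI[of _ "insert v I"]) (auto simp: N_def)
qed

lemma exists_maximal_disjoint_subfamily:
  assumes "finite S"
  obtains M where "M \<subseteq> S" "disjoint_family_on B M"
    and "\<And>i. i \<in> S - M \<Longrightarrow> \<exists>j\<in>M. B i \<inter> B j \<noteq> {}"
  using assms
proof (induction S arbitrary: thesis rule: finite_induct)
  case empty
  show ?case by (rule empty.prems) (auto simp: disjoint_family_on_def)
next
  case (insert i S)
  obtain M where M: "M \<subseteq> S" "disjoint_family_on B M"
    and hit: "\<And>k. k \<in> S - M \<Longrightarrow> \<exists>j\<in>M. B k \<inter> B j \<noteq> {}"
    using insert.IH by blast
  show ?case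
  proof (cases "\<exists>j\<in>M. B i \<inter> B j \<noteq> {}")
    case True
    then show ?thesis
      using M hit by (intro insert.prems[of M]) auto
  next
    case False
    have "i \<notin> M"
      using M(1) insert.hyps(2) by blast
    then have "disjoint_family_on B (insert i M)"
      using False M(2) by (auto simp: disjoint_family_on_insert)
    then show ?thesis
      using M hit by (intro insert.prems[of "insert i M"]) auto
  qed
qed

lemma card_meeting_disjoint_family_le:
  assumes "disjoint_family_on B M" "finite X"
  shows "card {j\<in>M. X \<inter> B j \<noteq> {}} \<le> card X"
proof -
  define pick where "pick j = (SOME x. x \<in> X \<inter> B j)" for j
  have pick: "pick j \<in> X \<inter> B j" if "X \<inter> B j \<noteq> {}" for j
    unfolding pick_def by (rule someI_ex) (use that in blast)
  have "inj_on pick {j\<in>M. X \<inter> B j \<noteq> {}}"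
  proof (rule inj_onI)
    fix j k
    assume j: "j \<in> {j\<in>M. X \<inter> B j \<noteq> {}}" and k: "k \<in> {j\<in>M. X \<inter> B j \<noteq> {}}"
      and "pick j = pick k"
    then have "pick j \<in> B j \<inter> B k"
      using pick[of j] pick[of k] by auto
    then show "j = k"
      using assms(1) j k by (auto simp: disjoint_family_on_def)
  qed
  moreover have "pick ` {j\<in>M. X \<inter> B j \<noteq> {}} \<subseteq> X"
    using pick by blast
  ultimately show ?thesis
    using assms(2) card_inj_on_le by blast
qed

lemma card_le_of_hitting_subfamily:
  fixes c F :: nat
  assumes "finite S" "M \<subseteq> S"
    and hit: "\<And>i. i \<in> S - M \<Longrightarrow> \<exists>j\<in>M. B i \<inter> B j \<noteq> {}"
    and B: "\<And>j. j \<in> M \<Longrightarrow> finite (B j) \<and> card (B j) \<le> c" and "1 \<le> c"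
    and deg: "\<And>j x. j \<in> M \<Longrightarrow> x \<in> B j \<Longrightarrow> card {i\<in>S. x \<in> B i} \<le> F" and "1 \<le> F"
  shows "card S \<le> card M * (c * F)"
proof -
  define N where "N j = insert j (\<Union>x\<in>B j. {i\<in>S. x \<in> B i})" for j
  have "S \<subseteq> (\<Union>j\<in>M. N j)"
  proof
    fix i assume "i \<in> S"
    show "i \<in> (\<Union>j\<in>M. N j)"
    proof (cases "i \<in> M")
      case True
      then show ?thesis by (auto simp: N_def)
    next
      case False
      with hit \<open>i \<in> S\<close> obtain j where "j \<in> M" "B i \<inter> B j \<noteq> {}" by blast
      with \<open>i \<in> S\<close> show ?thesis by (auto simp: N_def)
    qed
  qed
  moreover have "(\<Union>j\<in>M. N j) \<subseteq> S"
    using \<open>M \<subseteq> S\<close> by (auto simp: N_def)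
  ultimately have "card S = card (\<Union>j\<in>M. N j)"
    by (metis subset_antisym)
  also have "\<dots> \<le> (\<Sum>j\<in>M. card (N j))"
    using assms(1,2) finite_subset by (intro card_UN_le) blast
  also have "\<dots> \<le> card M * (c * F)"
  proof -
    have "card (N j) \<le> c * F" if "j \<in> M" for j
    proof (cases "B j = {}")
      case True
      then show ?thesis
        using \<open>1 \<le> c\<close> \<open>1 \<le> F\<close> by (simp add: N_def one_le_mult_iff)
    next
      case False
      then have "N j = (\<Union>x\<in>B j. {i\<in>S. x \<in> B i})"
        using \<open>j \<in> M\<close> \<open>M \<subseteq> S\<close> by (auto simp: N_def)
      then have "card (N j) \<le> (\<Sum>x\<in>B j. card {i\<in>S. x \<in> B i})"
        using B[OF \<open>j \<in> M\<close>] by (simp add: card_UN_le)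
      also have "\<dots> \<le> card (B j) * F"
        using deg[OF \<open>j \<in> M\<close>] sum_bounded_above[of "B j" _ F] by simp
      also have "\<dots> \<le> c * F"
        using B[OF \<open>j \<in> M\<close>] by simp
      finally show ?thesis .
    qed
    then show ?thesis
      using sum_bounded_above[of M "\<lambda>j. card (N j)" "c * F"] by simp
  qed
  finally show ?thesis .
qed

lemma exists_point_in_many_members:
  fixes c F :: nat
  assumes "finite S" "M \<subseteq> S"
    and "\<And>i. i \<in> S - M \<Longrightarrow> \<exists>j\<in>M. B i \<inter> B j \<noteq> {}"
    and "\<And>j. j \<in> M \<Longrightarrow> finite (B j) \<and> card (B j) \<le> c" and "1 \<le> c" and "1 \<le> F"
    and "card M * (c * F) < card S"
  obtains x where "F < card {i\<in>S. x \<in> B i}"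
proof (rule ccontr)
  assume "\<not> thesis"
  then have "card {i\<in>S. x \<in> B i} \<le> F" for x
    using that not_le by blast
  then have "card S \<le> card M * (c * F)"
    using assms(1-6) by (intro card_le_of_hitting_subfamily[of S M B]) auto
  with assms(7) show False
    by simp
qed

lemma exists_cross_disjoint_subset_of_disjoint_family:
  assumes "finite M" "disjoint_family_on B M"
    and A: "\<And>i. i \<in> M \<Longrightarrow> finite (A i) \<and> card (A i) \<le> a"
    and AB: "\<And>i. i \<in> M \<Longrightarrow> A i \<inter> B i = {}"
    and "t * (2 * a + 1) \<le> card M"
  shows "\<exists>I\<subseteq>M. card I = t \<and> (\<forall>i\<in>I. \<forall>j\<in>I. A i \<inter> B j = {})"
proof -
  have "card {v\<in>M. v \<noteq> u \<and> A u \<inter> B v \<noteq> {}} \<le> a" if "u \<in> M" for u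
  proof -
    have "card {v\<in>M. v \<noteq> u \<and> A u \<inter> B v \<noteq> {}} \<le> card {v\<in>M. A u \<inter> B v \<noteq> {}}"
      using \<open>finite M\<close> by (intro card_mono) auto
    also have "\<dots> \<le> card (A u)"
      using card_meeting_disjoint_family_le[OF assms(2), of "A u"] A[OF that] by simp
    finally show ?thesis
      using A[OF that] by simp
  qed
  from exists_independent_set_of_outdegree_le[OF assms(1) this assms(5)]
  obtain I where I: "I \<subseteq> M" "card I = t"
    and indep: "\<forall>i\<in>I. \<forall>j\<in>I. i \<noteq> j \<longrightarrow> \<not> A i \<inter> B j \<noteq> {}"
    by blast
  have cross: "A i \<inter> B j = {}" if "i \<in> I" "j \<in> I" for i j
  proof (cases "i = j")
    case True
    then show ?thesis
      using AB I(1) that by blast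
  next
    case False
    then show ?thesis
      using indep that by blast
  qed
  show ?thesis
    using I cross by (intro exI[of _ I]) simp
qed

lemma exists_cross_disjoint_subset:
  fixes a b s t :: nat
  assumes "finite S"
    and "\<And>i. i \<in> S \<Longrightarrow> finite (A i) \<and> card (A i) \<le> a"
    and "\<And>i. i \<in> S \<Longrightarrow> finite (B i) \<and> card (B i) \<le> b"
    and "\<And>i. i \<in> S \<Longrightarrow> A i \<inter> B i = {}"
    and "inj_on B S"
    and "1 \<le> s" and "t * (2 * a + 1) \<le> s + 1"
    and "fact b * s ^ b < card S"
  shows "\<exists>I\<subseteq>S. card I = t \<and> (\<forall>i\<in>I. \<forall>j\<in>I. A i \<inter> B j = {})"
  using assms(1-5,8)
proof (induction b arbitrary: S B)
  case 0
  have "B i = {}" if "i \<in> S" for i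
    using "0.prems"(3)[OF that] by (auto simp: card_eq_0_iff)
  then have "B ` S \<subseteq> {{}}"
    by blast
  then have "card (B ` S) \<le> 1"
    using card_mono[of "{{}}" "B ` S"] by simp
  with "0.prems"(5,6) show ?case
    by (simp add: card_image)
next
  case (Suc b)
  obtain M where M: "M \<subseteq> S" "disjoint_family_on B M"
    and hit: "\<And>i. i \<in> S - M \<Longrightarrow> \<exists>j\<in>M. B i \<inter> B j \<noteq> {}"
    using exists_maximal_disjoint_subfamily[OF Suc.prems(1)] by blast
  show ?case
  proof (cases "t * (2 * a + 1) \<le> card M")
    case True
    have "finite M"
      using M(1) Suc.prems(1) by (rule finite_subset)
    from exists_cross_disjoint_subset_of_disjoint_family[OF this M(2) _ _ True]
    obtain I where "I \<subseteq> M" "card I = t" "\<forall>i\<in>I. \<forall>j\<in>I. A i \<inter> B j = {}"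
      using M(1) Suc.prems(2,4) by blast
    then show ?thesis
      using M(1) by (intro exI[of _ I]) auto
  next
    case False
    then have "card M \<le> s"
      using assms(7) by linarith
    define F where "F = fact b * s ^ b"
    have "1 \<le> F"
      using assms(6) by (simp add: F_def)
    have "card M * (Suc b * F) \<le> s * (Suc b * F)"
      using \<open>card M \<le> s\<close> by simp
    also have "\<dots> = fact (Suc b) * s ^ Suc b"
      by (simp add: F_def algebra_simps)
    finally have "card M * (Suc b * F) < card S"
      using Suc.prems(6) by simp
    with Suc.prems(1,3) M(1) hit \<open>1 \<le> F\<close>
    obtain x where x: "F < card {i\<in>S. x \<in> B i}"
      by (elim exists_point_in_many_members[of S M B "Suc b"]) auto
    define S' where "S' = {i\<in>S. x \<in> B i}"
    have "\<exists>I\<subseteq>S'. card I = t \<and> (\<forall>i\<in>I. \<forall>j\<in>I. A i \<inter> (B j - {x}) = {})"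
    proof (rule Suc.IH)
      show "finite S'"
        using Suc.prems(1) by (simp add: S'_def)
      show "finite (A i) \<and> card (A i) \<le> a" if "i \<in> S'" for i
        using Suc.prems(2) that by (simp add: S'_def)
      show "finite (B i - {x}) \<and> card (B i - {x}) \<le> b" if "i \<in> S'" for i
        using Suc.prems(3)[of i] that by (auto simp: S'_def)
      show "A i \<inter> (B i - {x}) = {}" if "i \<in> S'" for i
        using Suc.prems(4) that by (auto simp: S'_def)
      show "inj_on (\<lambda>i. B i - {x}) S'"
        using Suc.prems(5) by (auto simp: S'_def inj_on_def insert_Diff[symmetric])
      show "fact b * s ^ b < card S'"
        using x by (simp add: S'_def F_def)
    qed
    then obtain I where I: "I \<subseteq> S'" "card I = t"
      and cross: "\<forall>i\<in>I. \<forall>j\<in>I. A i \<inter> (B j - {x}) = {}"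
      by blast
    have "x \<notin> A i" if "i \<in> I" for i
      using I(1) that Suc.prems(4) by (auto simp: S'_def)
    then have "\<forall>i\<in>I. \<forall>j\<in>I. A i \<inter> B j = {}"
      using cross by blast
    with I show ?thesis
      by (auto simp: S'_def)
  qed
qed

theorem lemma4p5:
  fixes a b t n :: nat
    and A B :: "nat \<Rightarrow> 'u set"
  assumes "t \<ge> 1"
    and "\<And>i. i \<in> {1..n} \<Longrightarrow> finite (A i) \<and> card (A i) \<le> a"
    and "\<And>i. i \<in> {1..n} \<Longrightarrow> finite (B i) \<and> card (B i) \<le> b"
    and "\<And>i. i \<in> {1..n} \<Longrightarrow> A i \<inter> B i = {}"
    and "\<And>i j. i \<in> {1..n} \<Longrightarrow> j \<in> {1..n} \<Longrightarrow> i \<noteq> j \<Longrightarrow> B i \<noteq> B j"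
    and "n > fact b * (t * (1 + 2 * a) - 1) ^ b"
  shows "\<exists>I. I \<subseteq> {1..n} \<and> card I = t \<and> (\<forall>i\<in>I. \<forall>j\<in>I. A i \<inter> B j = {})"
proof (cases "t * (1 + 2 * a) - 1 = 0")
  case True
  moreover have "t \<le> t * (1 + 2 * a)"
    by simp
  ultimately have "t = 1"
    using assms(1) by linarith
  moreover have "1 \<in> {1..n}"
    using assms(6) by simp
  ultimately show ?thesis
    using assms(4) by (intro exI[of _ "{1}"]) auto
next
  case False
  have "inj_on B {1..n}"
    using assms(5) by (meson inj_onI)
  then show ?thesis
    using exists_cross_disjoint_subset[of "{1..n}" A a B b "t * (1 + 2 * a) - 1" t] False assms(2-4,6)
    by (auto simp: add.commute)
qed

end
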